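(* There exists a constant $C>0$ such that for all $\eta,\bar\eta\in H$, denoting by $X(\cdot)=X(\cdot;\eta,0)$ and $\bar X(\cdot)=X(\cdot;\bar\eta,0)$ the mild solutions with null control, $$\|X(t)-\bar X(t)\|_{-1}\le C\|\eta-\bar\eta\|_{-1}\quad\text{and}\quad |X_0(t)-\bar X_0(t)|\le rC\|\eta-\bar\eta\|_{-1}\qquad\forall t\in[0,T].$$
   Context: $T>0$, $r>0$. $L^2_{-T}:=L^2([-T,0];\mathbb{R})$, $W^{1,2}_{-T}:=W^{1,2}([-T,0];\mathbb{R})$, $H:=\mathbb{R}\times L^2_{-T}$ with norm $\|\cdot\|$. $A:\mathcal{D}(A)\subset H\to H$, $\mathcal{D}(A):=\{\eta\in H:\eta_1\in W^{1,2}_{-T},\ \eta_1(0)=\eta_0\}$, $A(\eta_0,\eta_1):=(r\eta_0,\eta_1')$, generating the semigroup $S(t)(\eta_0,\eta_1)=\big(\eta_0e^{rt},I_{[-T,0]}(t+\cdot)\eta_1(t+\cdot)+I_{[0,\infty)}(t+\cdot)\eta_0e^{r(t+\cdot)}\big)$; $A^{-1}(\eta_0,\eta_1)=\big(\frac{\eta_0}{r},\ s\mapsto\frac{\eta_0}{r}-\int_s^0\eta_1\big)$, $\|\eta\|_{-1}:=\|A^{-1}\eta\|$. $a\in W^{1,2}_{-T}$, $a\ge0$, $a(-T)=0$; $f_0:\mathbb{R}^2\to\mathbb{R}$ Lipschitz. $f(\eta):=f_0(\eta_0,\int_{-T}^0a\eta_1)$, $F(\eta):=(f(\eta),0)$,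 $\hat n:=(1,0)$. For $\eta\in H$ and a control $c\in L^1_{loc}([0,\infty);[0,\infty))$, $X(\cdot;\eta,c)=(X_0,X_1)$ is the unique $X\in C([0,\infty);H)$ with $X(t)=S(t)\eta+\int_0^tS(t-\tau)F(X(\tau))d\tau-\int_0^tc(\tau)S(t-\tau)\hat n\,d\tau$. *)

theory Defs
  imports "HOL-Analysis.Analysis"
begin

text \<open>Elements of H = R x L2([-T,0]) are represented as pairs (eta0, eta1) with
  eta1 :: real => real; membership in H means eta1 is Borel measurable and square
  integrable on [-T,0].\<close>

type_synonym hval = "real \<times> (real \<Rightarrow> real)"

definition L2 :: "real \<Rightarrow> (real \<Rightarrow> real) \<Rightarrow> bool" where
  "L2 T g \<longleftrightarrow> set_borel_measurable lborel {-T..0} g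
      \<and> set_integrable lborel {-T..0} (\<lambda>s. (g s)\<^sup>2)"

definition in_H :: "real \<Rightarrow> hval \<Rightarrow> bool" where
  "in_H T \<eta> \<longleftrightarrow> L2 T (snd \<eta>)"

definition W12 :: "real \<Rightarrow> (real \<Rightarrow> real) \<Rightarrow> bool" where
  "W12 T a \<longleftrightarrow> (\<exists>a'. L2 T a' \<and>
      (\<forall>s\<in>{-T..0}. a s = a (-T) + (LBINT u:{-T..s}. a' u)))"

definition hnorm :: "real \<Rightarrow> hval \<Rightarrow> real" where
  "hnorm T \<eta> = sqrt ((fst \<eta>)\<^sup>2 + (LBINT s:{-T..0}. (snd \<eta> s)\<^sup>2))"

definition hdiff :: "hval \<Rightarrow> hval \<Rightarrow> hval" where
  "hdiff \<eta> \<xi> = (fst \<eta> - fst \<xi>, \<lambda>s. snd \<eta> s - snd \<xi> s)"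

definition heq :: "real \<Rightarrow> hval \<Rightarrow> hval \<Rightarrow> bool" where
  "heq T \<eta> \<xi> \<longleftrightarrow> fst \<eta> = fst \<xi> \<and>
      (AE s in lborel. s \<in> {-T..0} \<longrightarrow> snd \<eta> s = snd \<xi> s)"

definition Ainv :: "real \<Rightarrow> hval \<Rightarrow> hval" where
  "Ainv r \<eta> = (fst \<eta> / r, \<lambda>s. fst \<eta> / r - (LBINT u:{s..0}. snd \<eta> u))"

definition norm_m1 :: "real \<Rightarrow> real \<Rightarrow> hval \<Rightarrow> real" where
  "norm_m1 T r \<eta> = hnorm T (Ainv r \<eta>)"

definition Ssg :: "real \<Rightarrow> real \<Rightarrow> real \<Rightarrow> hval \<Rightarrow> hval" where
  "Ssg T r t \<eta> = (fst \<eta> * exp (r * t),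
      \<lambda>s. indicator {-T..0} (t + s) * snd \<eta> (t + s)
         + indicator {0..} (t + s) * fst \<eta> * exp (r * (t + s)))"

definition fF :: "real \<Rightarrow> (real \<Rightarrow> real) \<Rightarrow> (real \<times> real \<Rightarrow> real) \<Rightarrow> hval \<Rightarrow> real" where
  "fF T a f0 \<eta> = f0 (fst \<eta>, LBINT s:{-T..0}. a s * snd \<eta> s)"

definition FF :: "real \<Rightarrow> (real \<Rightarrow> real) \<Rightarrow> (real \<times> real \<Rightarrow> real) \<Rightarrow> hval \<Rightarrow> hval" where
  "FF T a f0 \<eta> = (fF T a f0 \<eta>, \<lambda>_. 0)"

definition nhat :: hval where "nhat = (1, \<lambda>_. 0)"

text \<open>Right-hand side of the mild formulation; the H-valued integrals are computed
  componentwise (pointwise in s for the L2 component).\<close>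
definition mild_rhs :: "real \<Rightarrow> real \<Rightarrow> (real \<Rightarrow> real) \<Rightarrow> (real \<times> real \<Rightarrow> real)
    \<Rightarrow> (real \<Rightarrow> real) \<Rightarrow> hval \<Rightarrow> (real \<Rightarrow> hval) \<Rightarrow> real \<Rightarrow> hval" where
  "mild_rhs T r a f0 c \<eta> X t =
     (fst (Ssg T r t \<eta>)
        + (LBINT \<tau>:{0..t}. fst (Ssg T r (t - \<tau>) (FF T a f0 (X \<tau>))))
        - (LBINT \<tau>:{0..t}. c \<tau> * fst (Ssg T r (t - \<tau>) nhat)),
      \<lambda>s. snd (Ssg T r t \<eta>) s
        + (LBINT \<tau>:{0..t}. snd (Ssg T r (t - \<tau>) (FF T a f0 (X \<tau>))) s)
        - (LBINT \<tau>:{0..t}. c \<tau> * snd (Ssg T r (t - \<tau>) nhat) s))"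

definition mild_sol :: "real \<Rightarrow> real \<Rightarrow> (real \<Rightarrow> real) \<Rightarrow> (real \<times> real \<Rightarrow> real)
    \<Rightarrow> (real \<Rightarrow> real) \<Rightarrow> hval \<Rightarrow> (real \<Rightarrow> hval) \<Rightarrow> bool" where
  "mild_sol T r a f0 c \<eta> X \<longleftrightarrow>
     (\<forall>t\<ge>0. in_H T (X t)) \<and>
     (\<forall>t\<ge>0. ((\<lambda>\<tau>. hnorm T (hdiff (X \<tau>) (X t))) \<longlongrightarrow> 0) (at t within {0..})) \<and>
     (\<forall>t\<ge>0. heq T (X t) (mild_rhs T r a f0 c \<eta> X t))"

end

theory Submission
  imports Defs
begin

(*
  Let X, Xb be mild solutions with null control and write D0 = X_0 - Xb_0, D1 = X_1 - Xb_1.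
  Two structural facts drive the proof.
  (1) The first component solves the scalar variation-of-constants formula
        D0(t) = (eta_0 - etab_0) e^{rt} + int_0^t (f(X tau) - f(Xb tau)) e^{r(t - tau)} dtau,
      and the second component is the delay of the first:  D1(t)(s) is the initial datum at
      t+s when t+s < 0 and D0(t+s) otherwise.
  (2) Since a(-T) = 0 and a' is in L2, integration by parts gives
        int a D1(t) = int a'(u) (int_u^0 D1(t)),
      and the tail integrals int_u^0 D1(t) are controlled by ||eta - etab||_{-1} (through the
      second component of A^{-1}(eta - etab)) plus int_0^t |D0|.
  Hence |D0| satisfies a linear integral inequality, and a Gronwall lemma (proved by the
  exponentially weighted supremum argument) bounds it by a multiple of ||eta - etab||_{-1}.
  Plugging this back into the tail integrals bounds ||X(t) - Xb(t)||_{-1}.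
*)

section \<open>General facts on real integrals\<close>

text \<open>Bounding the absolute value of an integral by an integrable majorant.\<close>
lemma integral_abs_le_majorant:
  fixes F B :: "'a \<Rightarrow> real"
  assumes "integrable M B" "\<And>x. \<bar>F x\<bar> \<le> B x"
  shows "\<bar>integral\<^sup>L M F\<bar> \<le> integral\<^sup>L M B"
proof (cases "integrable M F")
  case True
  have "\<bar>integral\<^sup>L M F\<bar> \<le> integral\<^sup>L M (\<lambda>x. \<bar>F x\<bar>)"
    using integral_norm_bound[of M F] by simp
  also have "\<dots> \<le> integral\<^sup>L M B"
    using True assms by (intro integral_mono) auto
  finally show ?thesis .
next
  case False
  then show ?thesis using assms
    by (simp add: not_integrable_integral_eq) (metis abs_ge_zero integral_nonneg_AE AE_I2 order_trans)
qed

text \<open>The product of two square integrable functions is integrable, since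
  \<open>2 |f g| \<le> f\<^sup>2 + g\<^sup>2\<close>.\<close>
lemma integrable_mult_of_squares:
  fixes f g :: "'a \<Rightarrow> real"
  assumes [measurable]: "f \<in> borel_measurable M" "g \<in> borel_measurable M"
    and "integrable M (\<lambda>x. (f x)\<^sup>2)" "integrable M (\<lambda>x. (g x)\<^sup>2)"
  shows "integrable M (\<lambda>x. f x * g x)"
proof (rule Bochner_Integration.integrable_bound[where f="\<lambda>x. (f x)\<^sup>2 + (g x)\<^sup>2"])
  show "AE x in M. norm (f x * g x) \<le> norm ((f x)\<^sup>2 + (g x)\<^sup>2)"
  proof (rule AE_I2)
    fix x
    have "2 * \<bar>f x * g x\<bar> \<le> (f x)\<^sup>2 + (g x)\<^sup>2"
      using zero_le_square[of "\<bar>f x\<bar> - \<bar>g x\<bar>"] by (simp add: power2_eq_square algebra_simps abs_mult)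
    then show "norm (f x * g x) \<le> norm ((f x)\<^sup>2 + (g x)\<^sup>2)" by simp
  qed
qed (use assms in auto)

lemma Cauchy_Schwarz_integral:
  fixes f g :: "'a \<Rightarrow> real"
  assumes [measurable]: "f \<in> borel_measurable M" "g \<in> borel_measurable M"
    and f2: "integrable M (\<lambda>x. (f x)\<^sup>2)" and g2: "integrable M (\<lambda>x. (g x)\<^sup>2)"
  shows "(\<integral>x. \<bar>f x * g x\<bar> \<partial>M) \<le> sqrt (\<integral>x. (f x)\<^sup>2 \<partial>M) * sqrt (\<integral>x. (g x)\<^sup>2 \<partial>M)"
proof -
  have fg: "integrable M (\<lambda>x. \<bar>f x * g x\<bar>)"
    using integrable_mult_of_squares[OF assms] by auto
  have nn: "(\<integral>\<^sup>+x. ennreal (h x) \<partial>M) = ennreal (\<integral>x. h x \<partial>M)"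
    if "integrable M h" "\<And>x. h x \<ge> 0" for h
    using that by (intro nn_integral_eq_integral) auto
  have prod: "(\<integral>\<^sup>+x. ennreal \<bar>f x\<bar> * ennreal \<bar>g x\<bar> \<partial>M) = ennreal (\<integral>x. \<bar>f x * g x\<bar> \<partial>M)"
    using nn[OF fg] by (simp add: abs_mult flip: ennreal_mult)
  have sq: "(\<integral>\<^sup>+x. ennreal \<bar>h x\<bar> ^ 2 \<partial>M) = ennreal (\<integral>x. (h x)\<^sup>2 \<partial>M)"
    if "integrable M (\<lambda>x. (h x)\<^sup>2)" for h
    using nn[OF that] by (simp add: ennreal_power)
  have "(\<integral>\<^sup>+x. ennreal \<bar>f x\<bar> * ennreal \<bar>g x\<bar> \<partial>M)\<^sup>2
        \<le> (\<integral>\<^sup>+x. ennreal \<bar>f x\<bar> ^ 2 \<partial>M) * (\<integral>\<^sup>+x. ennreal \<bar>g x\<bar> ^ 2 \<partial>M)"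
    by (rule Cauchy_Schwarz_nn_integral) auto
  then have "ennreal ((\<integral>x. \<bar>f x * g x\<bar> \<partial>M)\<^sup>2)
        \<le> ennreal ((\<integral>x. (f x)\<^sup>2 \<partial>M) * (\<integral>x. (g x)\<^sup>2 \<partial>M))"
    unfolding prod sq[OF f2] sq[OF g2] by (simp add: ennreal_power ennreal_mult)
  then have "(\<integral>x. \<bar>f x * g x\<bar> \<partial>M)\<^sup>2 \<le> (\<integral>x. (f x)\<^sup>2 \<partial>M) * (\<integral>x. (g x)\<^sup>2 \<partial>M)"
    by (subst (asm) ennreal_le_iff) auto
  then have "sqrt ((\<integral>x. \<bar>f x * g x\<bar> \<partial>M)\<^sup>2) \<le> sqrt ((\<integral>x. (f x)\<^sup>2 \<partial>M) * (\<integral>x. (g x)\<^sup>2 \<partial>M))"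
    by (rule real_sqrt_le_mono)
  then show ?thesis by (simp add: real_sqrt_mult)
qed

lemma set_integral_shift:
  fixes f :: "real \<Rightarrow> real"
  assumes "set_integrable lborel S f"
  shows "integrable lborel (\<lambda>u. indicator S (t + u) * f (t + u))"
    and "integral\<^sup>L lborel (\<lambda>u. indicator S (t + u) * f (t + u)) = (LBINT \<theta>:S. f \<theta>)"
  using assms lborel_integral_real_affine[where c=1 and t=t and f="\<lambda>\<theta>. indicator S \<theta> * f \<theta>"]
    lborel_integrable_real_affine_iff[where c=1 and t=t and f="\<lambda>\<theta>. indicator S \<theta> * f \<theta>"]
  by (simp_all add: set_integrable_def set_lebesgue_integral_def)

text \<open>This is the integration by parts behind the representation of \<open>\<integral> a \<eta>\<^sub>1\<close> through \<open>a'\<close>.\<close>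
lemma integral_Fubini_triangle:
  fixes A h :: "real \<Rightarrow> real"
  assumes iA: "integrable lborel A" and ih: "integrable lborel h"
  shows "integrable lborel (\<lambda>s. h s * integral\<^sup>L lborel (\<lambda>u. indicator {..s} u * A u))"
    and "integral\<^sup>L lborel (\<lambda>s. h s * integral\<^sup>L lborel (\<lambda>u. indicator {..s} u * A u))
       = integral\<^sup>L lborel (\<lambda>u. A u * integral\<^sup>L lborel (\<lambda>s. indicator {u..} s * h s))"
proof -
  define f where "f = (\<lambda>s u::real. h s * (indicator {..s} u * A u))"
  have [measurable]: "A \<in> borel_measurable lborel" "h \<in> borel_measurable lborel"
    using iA ih by auto
  have feq: "case_prod f = (\<lambda>p. h (fst p) * ((if snd p \<le> fst p then 1 else 0) * A (snd p)))"
    by (auto simp: f_def fun_eq_iff split: split_indicator)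
  have mf[measurable]: "case_prod f \<in> borel_measurable (lborel \<Otimes>\<^sub>M lborel)"
    unfolding feq by measurable
  have iiA: "integrable lborel (\<lambda>u. indicator {..s} u * A u)" for s
    by (rule Bochner_Integration.integrable_bound[OF iA]) (auto split: split_indicator)
  have inner_abs: "integral\<^sup>L lborel (\<lambda>u. norm (f s u)) \<le> \<bar>h s\<bar> * integral\<^sup>L lborel (\<lambda>u. \<bar>A u\<bar>)" for s
  proof -
    have "integral\<^sup>L lborel (\<lambda>u. indicator {..s} u * \<bar>A u\<bar>) \<le> integral\<^sup>L lborel (\<lambda>u. \<bar>A u\<bar>)"
      by (rule integral_mono[OF _ integrable_abs[OF iA]])
         (auto split: split_indicator
               intro: Bochner_Integration.integrable_bound[OF integrable_abs[OF iA]])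
    then show ?thesis
      by (simp add: f_def abs_mult mult_left_mono)
  qed
  have fint: "integrable (lborel \<Otimes>\<^sub>M lborel) (case_prod f)"
  proof (rule lborel_pair.Fubini_integrable[OF mf])
    show "integrable lborel (\<lambda>s. integral\<^sup>L lborel (\<lambda>u. norm (case_prod f (s, u))))"
    proof (rule Bochner_Integration.integrable_bound[where f="\<lambda>s. \<bar>h s\<bar> * integral\<^sup>L lborel (\<lambda>u. \<bar>A u\<bar>)"])
      show "(\<lambda>s. integral\<^sup>L lborel (\<lambda>u. norm (case_prod f (s, u)))) \<in> borel_measurable lborel"
        using mf by measurable
    qed (use ih inner_abs in \<open>auto intro!: AE_I2 simp: integral_nonneg_AE\<close>)
    show "AE s in lborel. integrable lborel (\<lambda>u. case_prod f (s, u))"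
      using iiA by (simp add: f_def)
  qed
  have e1: "\<And>s. integral\<^sup>L lborel (\<lambda>u. f s u) = h s * integral\<^sup>L lborel (\<lambda>u. indicator {..s} u * A u)"
    by (simp add: f_def)
  have e2: "\<And>u. integral\<^sup>L lborel (\<lambda>s. f s u) = A u * integral\<^sup>L lborel (\<lambda>s. indicator {u..} s * h s)"
  proof -
    fix u
    have "(\<lambda>s. f s u) = (\<lambda>s. A u * (indicator {u..} s * h s))"
      by (auto simp: f_def fun_eq_iff split: split_indicator)
    then show "integral\<^sup>L lborel (\<lambda>s. f s u) = A u * integral\<^sup>L lborel (\<lambda>s. indicator {u..} s * h s)"
      by simp
  qed
  show "integrable lborel (\<lambda>s. h s * integral\<^sup>L lborel (\<lambda>u. indicator {..s} u * A u))"
    using lborel_pair.integrable_fst'[OF fint] by (simp add: e1)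
  show "integral\<^sup>L lborel (\<lambda>s. h s * integral\<^sup>L lborel (\<lambda>u. indicator {..s} u * A u))
       = integral\<^sup>L lborel (\<lambda>u. A u * integral\<^sup>L lborel (\<lambda>s. indicator {u..} s * h s))"
    using lborel_pair.Fubini_integral[of f, OF fint] by (simp add: e1 e2)
qed

lemma measurable_tail_integral:
  fixes h :: "real \<Rightarrow> real"
  assumes "integrable lborel h"
  shows "(\<lambda>\<theta>. integral\<^sup>L lborel (\<lambda>v. indicator {\<theta>..0} v * h v)) \<in> borel_measurable lborel"
proof -
  have [measurable]: "h \<in> borel_measurable lborel" using assms by auto
  have e: "(\<lambda>(\<theta>, v). indicator {\<theta>..0} v * h v)
         = (\<lambda>p. (if fst p \<le> snd p \<and> snd p \<le> 0 then 1 else 0) * h (snd p))"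
    by (auto simp: fun_eq_iff split: split_indicator)
  have [measurable]: "(\<lambda>(\<theta>::real, v::real). indicator {\<theta>..0} v * h v) \<in> borel_measurable (lborel \<Otimes>\<^sub>M lborel)"
    unfolding e by measurable
  show ?thesis by measurable
qed

lemma set_integral_exp_linear:
  fixes lam t :: real
  assumes lam: "lam > 0" and t: "t \<ge> 0"
  shows "(LBINT \<theta>:{0..t}. exp (lam * \<theta>)) = (exp (lam * t) - 1) / lam"
proof -
  have "integral\<^sup>L lborel (\<lambda>x. indicator {0..t} x *\<^sub>R exp (lam * x)) = exp (lam * t) / lam - exp (lam * 0) / lam"
  proof (rule integral_FTC_atLeastAtMost[OF t])
    fix x :: real
    have "((\<lambda>x. exp (lam * x) / lam) has_real_derivative exp (lam * x)) (at x within {0..t})"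
      using lam by (auto intro!: derivative_eq_intros)
    then show "((\<lambda>x. exp (lam * x) / lam) has_vector_derivative exp (lam * x)) (at x within {0..t})"
      by (simp add: has_real_derivative_iff_has_vector_derivative)
  qed (intro continuous_intros)
  then show ?thesis by (simp add: set_lebesgue_integral_def diff_divide_distrib)
qed

lemma integral_le_exp_majorant:
  fixes u :: "real \<Rightarrow> real"
  assumes s: "s \<ge> 0" and M: "M \<ge> 0" and lam: "lam > 0" and cont: "continuous_on {0..s} u"
    and le: "\<And>\<theta>. \<theta> \<in> {0..s} \<Longrightarrow> u \<theta> \<le> M * exp (lam * \<theta>)"
  shows "(LBINT \<tau>:{0..s}. u \<tau>) \<le> M * exp (lam * s) / lam"
proof -
  have "(LBINT \<tau>:{0..s}. u \<tau>) \<le> (LBINT \<tau>:{0..s}. M * exp (lam * \<tau>))"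
    using le by (intro set_integral_mono borel_integrable_atLeastAtMost' cont) (auto intro!: continuous_intros)
  also have "\<dots> = M * ((exp (lam * s) - 1) / lam)"
    using s lam by (simp add: set_integral_exp_linear)
  also have "\<dots> \<le> M * (exp (lam * s) / lam)"
    using M lam by (intro mult_left_mono divide_right_mono) auto
  finally show ?thesis by simp
qed

text \<open>Gronwall's lemma in the form needed here, proved with the weighted supremum
  \<open>M = max\<^sub>\<theta> u(\<theta>) e\<^sup>-\<^sup>\<lambda>\<^sup>\<theta>\<close> for \<open>\<lambda> = 2\<beta> + 1\<close>: the integral inequality gives
  \<open>M \<le> \<alpha> + M/2\<close>.\<close>
lemma Gronwall_weighted_sup:
  fixes u :: "real \<Rightarrow> real" and T \<alpha> \<beta> :: real
  assumes T: "T \<ge> 0" and \<alpha>: "\<alpha> \<ge> 0" and \<beta>: "\<beta> \<ge> 0"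
    and cont: "continuous_on {0..T} u" and nonneg: "\<And>t. t \<in> {0..T} \<Longrightarrow> u t \<ge> 0"
    and ineq: "\<And>t. t \<in> {0..T} \<Longrightarrow> u t \<le> \<alpha> + \<beta> * (LBINT \<tau>:{0..t}. u \<tau>)"
    and t: "t \<in> {0..T}"
  shows "u t \<le> 2 * \<alpha> * exp ((2 * \<beta> + 1) * T)"
proof -
  define lam where "lam = 2 * \<beta> + 1"
  have lam: "lam > 0" "2 * \<beta> \<le> lam" using \<beta> by (auto simp: lam_def)
  define w where "w = (\<lambda>\<theta>. u \<theta> * exp (- (lam * \<theta>)))"
  have "continuous_on {0..T} w"
    unfolding w_def by (intro continuous_intros cont)
  then obtain \<theta>0 where \<theta>0: "\<theta>0 \<in> {0..T}" and wmax: "\<And>\<theta>. \<theta> \<in> {0..T} \<Longrightarrow> w \<theta> \<le> w \<theta>0"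
    using continuous_attains_sup[OF compact_Icc] T by (metis atLeastAtMost_iff order.refl empty_iff)
  define M where "M = w \<theta>0"
  have M0: "M \<ge> 0" using nonneg[OF \<theta>0] by (simp add: M_def w_def)
  have u_le: "u \<theta> \<le> M * exp (lam * \<theta>)" if "\<theta> \<in> {0..T}" for \<theta>
    using wmax[OF that] by (simp add: M_def w_def exp_minus field_simps)
  have int_le: "(LBINT \<tau>:{0..s}. u \<tau>) \<le> M * exp (lam * s) / lam" if "s \<in> {0..T}" for s
    using that u_le M0 lam
    by (intro integral_le_exp_majorant continuous_on_subset[OF cont]) auto
  have "M \<le> \<alpha> + M / 2"
  proof -
    have e: "exp (- (lam * \<theta>0)) \<le> 1" using \<theta>0 lam by auto
    have "M = u \<theta>0 * exp (- (lam * \<theta>0))" by (simp add: M_def w_def)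
    also have "\<dots> \<le> (\<alpha> + \<beta> * (M * exp (lam * \<theta>0) / lam)) * exp (- (lam * \<theta>0))"
    proof (rule mult_right_mono)
      show "u \<theta>0 \<le> \<alpha> + \<beta> * (M * exp (lam * \<theta>0) / lam)"
        using ineq[OF \<theta>0] mult_left_mono[OF int_le[OF \<theta>0] \<beta>] by linarith
    qed simp
    also have "\<dots> = \<alpha> * exp (- (lam * \<theta>0)) + \<beta> * M / lam"
      by (simp add: algebra_simps exp_minus)
    also have "\<dots> \<le> \<alpha> + M / 2"
    proof (rule add_mono)
      show "\<alpha> * exp (- (lam * \<theta>0)) \<le> \<alpha>" using \<alpha> e by (simp add: mult_left_le)
      have "2 * \<beta> * M \<le> lam * M" using mult_right_mono[OF lam(2) M0] by simp
      then show "\<beta> * M / lam \<le> M / 2" using lam by (simp add: field_simps)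
    qed
    finally show ?thesis .
  qed
  then have "M \<le> 2 * \<alpha>" by simp
  have "u t \<le> M * exp (lam * t)" by (rule u_le[OF t])
  also have "\<dots> \<le> 2 * \<alpha> * exp (lam * T)"
    using \<open>M \<le> 2 * \<alpha>\<close> M0 t lam by (intro mult_mono) auto
  finally show ?thesis by (simp add: lam_def)
qed

section \<open>Square integrable functions on \<open>[-T,0]\<close> and the norm of \<open>H\<close>\<close>

text \<open>Truncations to \<open>[-T,0]\<close> of \<open>L\<^sup>2\<close> functions are square integrable on the whole line;
  this is the form in which Cauchy-Schwarz is applied.\<close>
lemma L2_indicator_square:
  assumes "L2 T h"
  shows "integrable lborel (\<lambda>x. (indicator {-T..0} x * h x)\<^sup>2)"
proof -
  have "(\<lambda>x. (indicator {-T..0} x * h x)\<^sup>2) = (\<lambda>x. indicator {-T..0} x * (h x)\<^sup>2)"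
    by (auto simp: fun_eq_iff power2_eq_square split: split_indicator)
  then show ?thesis using assms by (simp add: L2_def set_integrable_def)
qed

lemma indicator_square_integrable:
  "integrable lborel (\<lambda>x. (indicator {-T..0} x :: real)\<^sup>2)"
  "integral\<^sup>L lborel (\<lambda>x. (indicator {-T..0} x :: real)\<^sup>2) = max T 0"
proof -
  have g2: "(\<lambda>x. (indicator {-T..0} x :: real)\<^sup>2) = indicator {-T..0}"
    by (auto simp: fun_eq_iff split: split_indicator)
  show "integrable lborel (\<lambda>x. (indicator {-T..0} x :: real)\<^sup>2)"
    unfolding g2 by (simp add: emeasure_lborel_Icc_eq)
  show "integral\<^sup>L lborel (\<lambda>x. (indicator {-T..0} x :: real)\<^sup>2) = max T 0"
    unfolding g2 by simp
qed

text \<open>On the bounded interval \<open>[-T,0]\<close>, \<open>L\<^sup>2 \<subseteq> L\<^sup>1\<close>, and \<open>\<parallel>h\<parallel>\<^sub>1 \<le> \<surd>T \<parallel>h\<parallel>\<^sub>2\<close>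
  (Cauchy-Schwarz against the indicator of \<open>[-T,0]\<close>).\<close>
lemma L2_set_integrable:
  assumes "L2 T h"
  shows "set_integrable lborel {-T..0} h"
proof -
  have "integrable lborel (\<lambda>x. (indicator {-T..0} x * h x) * indicator {-T..0} x)"
    using assms
    by (intro integrable_mult_of_squares L2_indicator_square indicator_square_integrable)
       (auto simp: L2_def set_borel_measurable_def)
  moreover have "(\<lambda>x. (indicator {-T..0} x * h x) * indicator {-T..0} x) = (\<lambda>x. indicator {-T..0} x * h x)"
    by (auto simp: fun_eq_iff split: split_indicator)
  ultimately show ?thesis by (simp add: set_integrable_def)
qed

lemma L2_abs_integral_le:
  assumes "L2 T h" "T \<ge> 0"
  shows "(LBINT s:{-T..0}. \<bar>h s\<bar>) \<le> sqrt T * sqrt (LBINT s:{-T..0}. (h s)\<^sup>2)"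
proof -
  let ?f = "\<lambda>x. indicator {-T..0} x * h x"
  let ?g = "\<lambda>x. indicator {-T..0} x :: real"
  have "integral\<^sup>L lborel (\<lambda>x. \<bar>?f x * ?g x\<bar>)
        \<le> sqrt (integral\<^sup>L lborel (\<lambda>x. (?f x)\<^sup>2)) * sqrt (integral\<^sup>L lborel (\<lambda>x. (?g x)\<^sup>2))"
    using assms(1)
    by (intro Cauchy_Schwarz_integral L2_indicator_square indicator_square_integrable)
       (auto simp: L2_def set_borel_measurable_def)
  moreover have "(\<lambda>x. \<bar>?f x * ?g x\<bar>) = (\<lambda>x. indicator {-T..0} x * \<bar>h x\<bar>)"
    and "(\<lambda>x. (?f x)\<^sup>2) = (\<lambda>x. indicator {-T..0} x * (h x)\<^sup>2)"
    by (auto simp: fun_eq_iff power2_eq_square split: split_indicator)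
  ultimately show ?thesis
    using assms(2) indicator_square_integrable(2)[of T]
    by (simp add: set_lebesgue_integral_def mult.commute)
qed

text \<open>\<open>L\<^sup>2\<close> is closed under differences (pointwise \<open>(f - g)\<^sup>2 \<le> 2f\<^sup>2 + 2g\<^sup>2\<close>).\<close>
lemma L2_diff:
  assumes "L2 T f" "L2 T g"
  shows "L2 T (\<lambda>s. f s - g s)"
proof -
  have [measurable]: "(\<lambda>x. indicator {-T..0} x * f x) \<in> borel_measurable lborel"
      "(\<lambda>x. indicator {-T..0} x * g x) \<in> borel_measurable lborel"
    using assms by (simp_all add: L2_def set_borel_measurable_def)
  have ind: "(\<lambda>x. indicator {-T..0} x * (f x - g x))
           = (\<lambda>x. indicator {-T..0} x * f x - indicator {-T..0} x * g x)"
    by (auto simp: fun_eq_iff algebra_simps)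
  have m: "(\<lambda>x. indicator {-T..0} x * (f x - g x)) \<in> borel_measurable lborel"
    unfolding ind by measurable
  have sq: "(\<lambda>x. indicator {-T..0} x * (f x - g x)\<^sup>2) = (\<lambda>x. (indicator {-T..0} x * (f x - g x))\<^sup>2)"
    by (auto simp: fun_eq_iff split: split_indicator)
  have "integrable lborel (\<lambda>x. indicator {-T..0} x * (f x - g x)\<^sup>2)"
  proof (rule Bochner_Integration.integrable_bound
      [where f="\<lambda>x. 2 * (indicator {-T..0} x * (f x)\<^sup>2) + 2 * (indicator {-T..0} x * (g x)\<^sup>2)"])
    show "integrable lborel (\<lambda>x. 2 * (indicator {-T..0} x * (f x)\<^sup>2) + 2 * (indicator {-T..0} x * (g x)\<^sup>2))"
      using assms by (auto simp: L2_def set_integrable_def)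
    show "(\<lambda>x. indicator {-T..0} x * (f x - g x)\<^sup>2) \<in> borel_measurable lborel"
      unfolding sq using m by simp
    have "(f x - g x)\<^sup>2 \<le> 2 * (f x)\<^sup>2 + 2 * (g x)\<^sup>2" for x
      using zero_le_square[of "f x + g x"] by (simp add: power2_eq_square algebra_simps)
    then show "AE x in lborel. norm (indicator {-T..0} x * (f x - g x)\<^sup>2)
        \<le> norm (2 * (indicator {-T..0} x * (f x)\<^sup>2) + 2 * (indicator {-T..0} x * (g x)\<^sup>2))"
      by (intro AE_I2) (auto split: split_indicator)
  qed
  then show ?thesis using m by (simp add: L2_def set_borel_measurable_def set_integrable_def)
qed

lemma tail_integral_abs_le:
  fixes h :: "real \<Rightarrow> real"
  assumes "set_integrable lborel {-T..0} h" and "u \<in> {-T..0}"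
  shows "\<bar>LBINT s:{u..0}. h s\<bar> \<le> (LBINT s:{-T..0}. \<bar>h s\<bar>)"
  unfolding set_lebesgue_integral_def real_scaleR_def
proof (rule integral_abs_le_majorant)
  show "integrable lborel (\<lambda>x. indicator {-T..0} x * \<bar>h x\<bar>)"
    using integrable_abs[OF assms(1)[unfolded set_integrable_def]] by (simp add: abs_mult)
  show "\<bar>indicator {u..0} x * h x\<bar> \<le> indicator {-T..0} x * \<bar>h x\<bar>" for x
    using assms(2) by (auto split: split_indicator)
qed

lemma hnorm_fst_le: "\<bar>fst \<xi>\<bar> \<le> hnorm T \<xi>"
proof -
  have "sqrt ((fst \<xi>)\<^sup>2) \<le> hnorm T \<xi>"
    unfolding hnorm_def by (rule real_sqrt_le_mono) (simp add: set_lebesgue_integral_def)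
  then show ?thesis by simp
qed

lemma hnorm_snd_le: "sqrt (LBINT s:{-T..0}. (snd \<xi> s)\<^sup>2) \<le> hnorm T \<xi>"
  unfolding hnorm_def by (rule real_sqrt_le_mono) simp

section \<open>The data of the problem and the mild formulation\<close>

locale delay_data =
  fixes T r :: real and a a' :: "real \<Rightarrow> real" and f0 :: "real \<times> real \<Rightarrow> real" and L :: real
  assumes T: "T > 0" and r: "r > 0" and a'_L2: "L2 T a'"
    and a_primitive: "\<And>s. s \<in> {-T..0} \<Longrightarrow> a s = (LBINT u:{-T..s}. a' u)"
    and f0_lipschitz: "L-lipschitz_on UNIV f0"
begin

definition A1 :: real where "A1 = (LBINT s:{-T..0}. \<bar>a' s\<bar>)"
definition A2 :: real where "A2 = (LBINT s:{-T..0}. (a' s)\<^sup>2)"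

lemma A1_nonneg: "A1 \<ge> 0"
  unfolding A1_def by (simp add: set_lebesgue_integral_def)

lemma A2_nonneg: "A2 \<ge> 0"
  unfolding A2_def by (simp add: set_lebesgue_integral_def)

lemma L_nonneg: "L \<ge> 0"
  using f0_lipschitz by (simp add: lipschitz_on_def)

lemma a'_set_integrable: "set_integrable lborel {-T..0} a'"
  using L2_set_integrable[OF a'_L2] .

text \<open>Integration by parts, using \<open>a(-T) = 0\<close>:
  \<open>\<integral>\<^sub>-\<^sub>T\<^sup>0 a h = \<integral>\<^sub>-\<^sub>T\<^sup>0 a'(u) (\<integral>\<^sub>u\<^sup>0 h)\<close>.\<close>
lemma integral_a_by_parts:
  fixes h :: "real \<Rightarrow> real"
  assumes ih: "set_integrable lborel {-T..0} h"
  shows "set_integrable lborel {-T..0} (\<lambda>s. a s * h s)"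
    and "(LBINT s:{-T..0}. a s * h s) = (LBINT u:{-T..0}. a' u * (LBINT s:{u..0}. h s))"
proof -
  define A where "A = (\<lambda>u. indicator {-T..0} u * a' u)"
  define H where "H = (\<lambda>s. indicator {-T..0} s * h s)"
  have iA: "integrable lborel A" using a'_set_integrable by (simp add: A_def set_integrable_def)
  have iH: "integrable lborel H" using ih by (simp add: H_def set_integrable_def)
  have p1: "H s * integral\<^sup>L lborel (\<lambda>u. indicator {..s} u * A u) = indicator {-T..0} s * (a s * h s)" for s
  proof (cases "s \<in> {-T..0}")
    case True
    have "(\<lambda>u. indicator {..s} u * A u) = (\<lambda>u. indicator {-T..s} u * a' u)"
      using True by (auto simp: A_def fun_eq_iff split: split_indicator)
    then show ?thesis
      using True a_primitive[OF True] by (simp add: H_def set_lebesgue_integral_def)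
  qed (simp add: H_def)
  have p2: "A u * integral\<^sup>L lborel (\<lambda>s. indicator {u..} s * H s)
          = indicator {-T..0} u * (a' u * (LBINT s:{u..0}. h s))" for u
  proof (cases "u \<in> {-T..0}")
    case True
    have "(\<lambda>s. indicator {u..} s * H s) = (\<lambda>s. indicator {u..0} s * h s)"
      using True by (auto simp: H_def fun_eq_iff split: split_indicator)
    then show ?thesis using True by (simp add: A_def set_lebesgue_integral_def)
  qed (simp add: A_def)
  note Fubini = integral_Fubini_triangle[OF iA iH]
  show "set_integrable lborel {-T..0} (\<lambda>s. a s * h s)"
    using Fubini(1) unfolding p1 by (simp add: set_integrable_def)
  show "(LBINT s:{-T..0}. a s * h s) = (LBINT u:{-T..0}. a' u * (LBINT s:{u..0}. h s))"
    using Fubini(2) unfolding p1 p2 by (simp add: set_lebesgue_integral_def)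
qed

lemma integral_a_abs_le:
  fixes h :: "real \<Rightarrow> real"
  assumes ih: "set_integrable lborel {-T..0} h"
  shows "\<bar>LBINT s:{-T..0}. a s * h s\<bar> \<le> A1 * (LBINT s:{-T..0}. \<bar>h s\<bar>)"
proof -
  have "\<bar>LBINT s:{-T..0}. a s * h s\<bar> = \<bar>LBINT u:{-T..0}. a' u * (LBINT s:{u..0}. h s)\<bar>"
    using integral_a_by_parts(2)[OF ih] by simp
  also have "\<dots> \<le> integral\<^sup>L lborel (\<lambda>u. indicator {-T..0} u * \<bar>a' u\<bar> * (LBINT s:{-T..0}. \<bar>h s\<bar>))"
    unfolding set_lebesgue_integral_def[of _ _ "\<lambda>u. a' u * (LBINT s:{u..0}. h s)"] real_scaleR_def
  proof (rule integral_abs_le_majorant)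
    show "integrable lborel (\<lambda>u. indicator {-T..0} u * \<bar>a' u\<bar> * (LBINT s:{-T..0}. \<bar>h s\<bar>))"
      using integrable_abs[OF a'_set_integrable[unfolded set_integrable_def]] by (simp add: abs_mult)
    show "\<bar>indicator {-T..0} u * (a' u * (LBINT s:{u..0}. h s))\<bar>
        \<le> indicator {-T..0} u * \<bar>a' u\<bar> * (LBINT s:{-T..0}. \<bar>h s\<bar>)" for u
      using tail_integral_abs_le[OF ih, of u]
      by (cases "u \<in> {-T..0}") (simp_all add: abs_mult mult_left_mono)
  qed
  also have "\<dots> = A1 * (LBINT s:{-T..0}. \<bar>h s\<bar>)"
    by (simp add: A1_def set_lebesgue_integral_def abs_mult)
  finally show ?thesis .
qed

lemma fF_lipschitz_components:
  assumes "in_H T \<xi>" "in_H T \<xi>'"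
  shows "\<bar>fF T a f0 \<xi> - fF T a f0 \<xi>'\<bar>
       \<le> L * (\<bar>fst \<xi> - fst \<xi>'\<bar> + \<bar>LBINT s:{-T..0}. a s * (snd \<xi> s - snd \<xi>' s)\<bar>)"
proof -
  have i: "set_integrable lborel {-T..0} (snd \<xi>)" "set_integrable lborel {-T..0} (snd \<xi>')"
    using assms L2_set_integrable by (auto simp: in_H_def)
  have lin: "(LBINT s:{-T..0}. a s * snd \<xi> s) - (LBINT s:{-T..0}. a s * snd \<xi>' s)
           = (LBINT s:{-T..0}. a s * (snd \<xi> s - snd \<xi>' s))"
    using set_integral_diff(2)[OF integral_a_by_parts(1)[OF i(1)] integral_a_by_parts(1)[OF i(2)]]
    by (simp add: right_diff_distrib)
  define P where "P = (fst \<xi>, LBINT s:{-T..0}. a s * snd \<xi> s)"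
  define Q where "Q = (fst \<xi>', LBINT s:{-T..0}. a s * snd \<xi>' s)"
  have "\<bar>fF T a f0 \<xi> - fF T a f0 \<xi>'\<bar> = dist (f0 P) (f0 Q)"
    by (simp add: fF_def dist_real_def P_def Q_def)
  also have "\<dots> \<le> L * dist P Q"
    using f0_lipschitz unfolding lipschitz_on_def by blast
  also have "dist P Q \<le> \<bar>fst \<xi> - fst \<xi>'\<bar> + \<bar>LBINT s:{-T..0}. a s * (snd \<xi> s - snd \<xi>' s)\<bar>"
    unfolding P_def Q_def dist_Pair_Pair dist_real_def lin[symmetric] power2_abs
    by (rule sqrt_sum_squares_le_sum_abs)
  finally show ?thesis using L_nonneg by (simp add: mult_left_mono)
qed

lemma fF_lipschitz:
  assumes "in_H T \<xi>" "in_H T \<xi>'"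
  shows "\<bar>fF T a f0 \<xi> - fF T a f0 \<xi>'\<bar> \<le> L * (1 + A1 * sqrt T) * hnorm T (hdiff \<xi> \<xi>')"
proof -
  let ?d = "\<lambda>s. snd \<xi> s - snd \<xi>' s"
  have d: "L2 T ?d" using assms L2_diff by (simp add: in_H_def)
  have "\<bar>LBINT s:{-T..0}. a s * ?d s\<bar> \<le> A1 * (LBINT s:{-T..0}. \<bar>?d s\<bar>)"
    by (rule integral_a_abs_le[OF L2_set_integrable[OF d]])
  also have "\<dots> \<le> A1 * (sqrt T * sqrt (LBINT s:{-T..0}. (?d s)\<^sup>2))"
    using L2_abs_integral_le[OF d] T A1_nonneg by (intro mult_left_mono) auto
  also have "\<dots> \<le> A1 * (sqrt T * hnorm T (hdiff \<xi> \<xi>'))"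
    using hnorm_snd_le[of T "hdiff \<xi> \<xi>'"] T A1_nonneg
    by (intro mult_left_mono) (auto simp: hdiff_def)
  finally have "\<bar>fF T a f0 \<xi> - fF T a f0 \<xi>'\<bar>
      \<le> L * (hnorm T (hdiff \<xi> \<xi>') + A1 * (sqrt T * hnorm T (hdiff \<xi> \<xi>')))"
    using fF_lipschitz_components[OF assms] hnorm_fst_le[of "hdiff \<xi> \<xi>'" T] L_nonneg
    by (smt (verit) hdiff_def fst_conv mult_left_mono)
  then show ?thesis by (simp add: algebra_simps)
qed

lemma mild_sol_in_H:
  "mild_sol T r a f0 c \<eta> X \<Longrightarrow> t \<ge> 0 \<Longrightarrow> in_H T (X t)"
  by (simp add: mild_sol_def)

lemma mild_sol_continuous_compose:
  assumes ms: "mild_sol T r a f0 c \<eta> X"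
    and lip: "\<And>\<tau> t. \<tau> \<ge> 0 \<Longrightarrow> t \<ge> 0 \<Longrightarrow> \<bar>\<phi> (X \<tau>) - \<phi> (X t)\<bar> \<le> K * hnorm T (hdiff (X \<tau>) (X t))"
  shows "continuous_on {0..} (\<lambda>\<tau>. \<phi> (X \<tau>))"
  unfolding continuous_on_def
proof (intro ballI)
  fix t :: real assume t: "t \<in> {0..}"
  have "((\<lambda>\<tau>. \<phi> (X \<tau>) - \<phi> (X t)) \<longlongrightarrow> 0) (at t within {0..})"
  proof (rule Lim_null_comparison)
    show "\<forall>\<^sub>F \<tau> in at t within {0..}. norm (\<phi> (X \<tau>) - \<phi> (X t)) \<le> K * hnorm T (hdiff (X \<tau>) (X t))"
      unfolding eventually_at_filter by (rule always_eventually) (use t lip in auto)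
    have "((\<lambda>\<tau>. hnorm T (hdiff (X \<tau>) (X t))) \<longlongrightarrow> 0) (at t within {0..})"
      using ms t by (simp add: mild_sol_def)
    then show "((\<lambda>\<tau>. K * hnorm T (hdiff (X \<tau>) (X t))) \<longlongrightarrow> 0) (at t within {0..})"
      by (rule tendsto_mult_right_zero)
  qed
  then show "((\<lambda>\<tau>. \<phi> (X \<tau>)) \<longlongrightarrow> \<phi> (X t)) (at t within {0..})"
    by (rule LIM_zero_cancel)
qed

lemma mild_sol_fst_continuous:
  "mild_sol T r a f0 c \<eta> X \<Longrightarrow> continuous_on {0..} (\<lambda>\<tau>. fst (X \<tau>))"
  by (rule mild_sol_continuous_compose[where K=1])
     (use hnorm_fst_le in \<open>auto simp: hdiff_def\<close>)

lemma mild_sol_fF_continuous: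
  "mild_sol T r a f0 c \<eta> X \<Longrightarrow> continuous_on {0..} (\<lambda>\<tau>. fF T a f0 (X \<tau>))"
  by (rule mild_sol_continuous_compose[where K="L * (1 + A1 * sqrt T)"])
     (auto intro: fF_lipschitz mild_sol_in_H)

lemma mild_sol_fst_formula:
  assumes "mild_sol T r a f0 (\<lambda>_. 0) \<eta> X" "t \<ge> 0"
  shows "fst (X t) = fst \<eta> * exp (r*t) + (LBINT \<tau>:{0..t}. fF T a f0 (X \<tau>) * exp (r*(t-\<tau>)))"
  using assms
  by (simp add: mild_sol_def heq_def mild_rhs_def Ssg_def FF_def set_lebesgue_integral_def)

lemma mild_sol_snd_formula:
  assumes ms: "mild_sol T r a f0 (\<lambda>_. 0) \<eta> X" and t: "t \<ge> 0"
  shows "AE s in lborel. s \<in> {-T..0} \<longrightarrow> s \<noteq> -t \<longrightarrow>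
           snd (X t) s = (if t + s < 0 then snd \<eta> (t+s) else fst (X (t+s)))"
proof -
  have ae: "AE s in lborel. s \<in> {-T..0} \<longrightarrow> snd (X t) s = snd (mild_rhs T r a f0 (\<lambda>_. 0) \<eta> X t) s"
    using ms t by (simp add: mild_sol_def heq_def)
  have pt: "snd (mild_rhs T r a f0 (\<lambda>_. 0) \<eta> X t) s = (if t + s < 0 then snd \<eta> (t+s) else fst (X (t+s)))"
    if s: "s \<in> {-T..0}" "s \<noteq> -t" for s
  proof -
    let ?I = "\<lambda>\<tau>. indicator {0..t} \<tau> * (indicator {0..} (t - \<tau> + s) * fF T a f0 (X \<tau>) * exp (r*(t - \<tau> + s)))"
    have rhs: "snd (mild_rhs T r a f0 (\<lambda>_. 0) \<eta> X t) s =
          indicator {-T..0} (t+s) * snd \<eta> (t+s) + indicator {0..} (t+s) * fst \<eta> * exp (r*(t+s))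
          + integral\<^sup>L lborel ?I"
      by (simp add: mild_rhs_def Ssg_def FF_def set_lebesgue_integral_def)
    show ?thesis
    proof (cases "t + s < 0")
      case True
      then have "?I = (\<lambda>_. 0)" by (auto simp: fun_eq_iff split: split_indicator)
      then show ?thesis using True s t unfolding rhs by (simp split: split_indicator)
    next
      case False
      then have ts: "t + s > 0" using s by auto
      have "?I = (\<lambda>\<tau>. indicator {0..t+s} \<tau> * (fF T a f0 (X \<tau>) * exp (r*(t + s - \<tau>))))"
        using ts s by (auto simp: fun_eq_iff split: split_indicator)
      then show ?thesis
        using False ts mild_sol_fst_formula[OF ms, of "t+s"] unfolding rhs
        by (simp add: set_lebesgue_integral_def split: split_indicator)
    qed
  qed
  show ?thesis using ae by eventually_elim (use pt in auto)
qed

text \<open>Constants of the stability estimate: \<open>\<alpha>\<^sub>D \<parallel>\<eta> - \<eta>b\<parallel>\<^sub>-\<^sub>1\<close> and \<open>\<beta>\<^sub>D\<close> are the coefficients of the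
  integral inequality for \<open>|X\<^sub>0 - Xb\<^sub>0|\<close>, \<open>K\<^sub>D\<close> is the resulting Gronwall bound, and
  \<open>C\<^sub>s\<^sub>t\<^sub>a\<^sub>b\<close> the final constant.\<close>
definition alpha_D :: real where "alpha_D = exp (r*T) * (r + T * L * (A1 + sqrt A2))"
definition beta_D :: real where "beta_D = exp (r*T) * L * (1 + T * A1)"
definition K_D :: real where "K_D = 2 * alpha_D * exp ((2 * beta_D + 1) * T)"
definition C_stab :: real where
  "C_stab = sqrt ((K_D/r)\<^sup>2 + 2 * T * (K_D/r + T * K_D + 1)\<^sup>2 + 2)"

lemma alpha_D_nonneg: "alpha_D \<ge> 0"
  unfolding alpha_D_def using r T L_nonneg A1_nonneg A2_nonneg by simp

lemma beta_D_nonneg: "beta_D \<ge> 0"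
  unfolding beta_D_def using T L_nonneg A1_nonneg by simp

lemma K_D_nonneg: "K_D \<ge> 0"
  unfolding K_D_def using alpha_D_nonneg by simp

lemma C_stab_pos: "C_stab > 0"
  unfolding C_stab_def using T by (intro real_sqrt_gt_zero add_nonneg_pos) auto

lemma K_D_le_C_stab: "K_D / r \<le> C_stab"
  unfolding C_stab_def using T by (intro real_le_rsqrt) auto

end

section \<open>Two mild solutions with null control\<close>

locale solution_pair = delay_data +
  fixes \<eta> \<eta>b :: hval and X Xb :: "real \<Rightarrow> hval"
  assumes \<eta>_H: "in_H T \<eta>" and \<eta>b_H: "in_H T \<eta>b"
    and X_mild: "mild_sol T r a f0 (\<lambda>_. 0) \<eta> X" and Xb_mild: "mild_sol T r a f0 (\<lambda>_. 0) \<eta>b Xb"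
begin

text \<open>Differences of the initial data and of the solutions; \<open>g\<close> is the difference of the
  nonlinear terms, \<open>nn = \<parallel>\<eta> - \<eta>b\<parallel>\<^sub>-\<^sub>1\<close>, and \<open>A\<^sup>-\<^sup>1(\<eta> - \<eta>b) = (z\<^sub>0/r, \<phi>)\<close>.\<close>
definition z0 :: real where "z0 = fst \<eta> - fst \<eta>b"
definition z1 :: "real \<Rightarrow> real" where "z1 = (\<lambda>s. snd \<eta> s - snd \<eta>b s)"
definition D0 :: "real \<Rightarrow> real" where "D0 = (\<lambda>t. fst (X t) - fst (Xb t))"
definition D1 :: "real \<Rightarrow> real \<Rightarrow> real" where "D1 = (\<lambda>t s. snd (X t) s - snd (Xb t) s)"
definition g :: "real \<Rightarrow> real" where "g = (\<lambda>\<tau>. fF T a f0 (X \<tau>) - fF T a f0 (Xb \<tau>))"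
definition Z1 :: "real \<Rightarrow> real" where "Z1 = (\<lambda>\<theta>. LBINT v:{\<theta>..0}. z1 v)"
definition phi :: "real \<Rightarrow> real" where "phi = (\<lambda>\<theta>. z0 / r - Z1 \<theta>)"
definition nn :: real where "nn = norm_m1 T r (hdiff \<eta> \<eta>b)"

text \<open>\<open>\<phi>\<close> shifted by \<open>t\<close> and cut off outside \<open>[-T,0]\<close>; it carries the contribution of the
  initial datum to the tail integrals of \<open>D1 t\<close>.\<close>
definition phi_shift :: "real \<Rightarrow> real \<Rightarrow> real" where
  "phi_shift t s = indicator {-T..0} (t+s) * phi (t+s)"

lemma z1_set_integrable: "set_integrable lborel {-T..0} z1"
  unfolding z1_def using L2_diff \<eta>_H \<eta>b_H by (intro L2_set_integrable) (simp add: in_H_def)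

lemma D1_set_integrable: "t \<ge> 0 \<Longrightarrow> set_integrable lborel {-T..0} (D1 t)"
  unfolding D1_def using L2_diff mild_sol_in_H[OF X_mild] mild_sol_in_H[OF Xb_mild]
  by (intro L2_set_integrable) (simp add: in_H_def)

lemma D0_continuous: "continuous_on {0..} D0"
  unfolding D0_def
  by (intro continuous_on_diff mild_sol_fst_continuous[OF X_mild] mild_sol_fst_continuous[OF Xb_mild])

lemma D0_abs_set_integrable: "set_integrable lborel {0..t} (\<lambda>\<theta>. \<bar>D0 \<theta>\<bar>)"
  by (rule borel_integrable_atLeastAtMost')
     (auto intro!: continuous_intros continuous_on_subset[OF D0_continuous])

lemma D0_formula:
  assumes t: "t \<ge> 0"
  shows "D0 t = z0 * exp (r*t) + (LBINT \<tau>:{0..t}. g \<tau> * exp (r*(t-\<tau>)))"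
proof -
  have i: "set_integrable lborel {0..t} (\<lambda>\<tau>. fF T a f0 (Y \<tau>) * exp (r*(t-\<tau>)))"
    if "continuous_on {0..} (\<lambda>\<tau>. fF T a f0 (Y \<tau>))" for Y
    by (rule borel_integrable_atLeastAtMost')
       (auto intro!: continuous_intros continuous_on_subset[OF that])
  show ?thesis
    unfolding D0_def mild_sol_fst_formula[OF X_mild t] mild_sol_fst_formula[OF Xb_mild t]
    using set_integral_diff(2)[OF i[OF mild_sol_fF_continuous[OF X_mild]] i[OF mild_sol_fF_continuous[OF Xb_mild]]]
    by (simp add: z0_def g_def algebra_simps)
qed

lemma D1_formula:
  assumes t: "t \<ge> 0"
  shows "AE s in lborel. s \<in> {-T..0} \<longrightarrow> s \<noteq> -t \<longrightarrow> D1 t s = (if t + s < 0 then z1 (t+s) else D0 (t+s))"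
  using mild_sol_snd_formula[OF X_mild t] mild_sol_snd_formula[OF Xb_mild t]
  by eventually_elim (auto simp: D1_def z1_def D0_def)

lemma z0_le: "\<bar>z0\<bar> \<le> r * nn"
proof -
  have "\<bar>z0 / r\<bar> \<le> nn"
    using hnorm_fst_le[of "Ainv r (hdiff \<eta> \<eta>b)" T]
    by (simp add: nn_def norm_m1_def Ainv_def hdiff_def z0_def)
  then show ?thesis using r by (simp add: divide_le_eq mult.commute)
qed

lemma nn_nonneg: "nn \<ge> 0"
  using hnorm_fst_le[of "Ainv r (hdiff \<eta> \<eta>b)" T] unfolding nn_def norm_m1_def
  by (meson abs_ge_zero order_trans)

lemma phi_sq_integral_le: "(LBINT \<theta>:{-T..0}. (phi \<theta>)\<^sup>2) \<le> nn\<^sup>2"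
proof -
  have "sqrt (LBINT \<theta>:{-T..0}. (phi \<theta>)\<^sup>2) \<le> nn"
    using hnorm_snd_le[of T "Ainv r (hdiff \<eta> \<eta>b)"]
    by (simp add: nn_def norm_m1_def Ainv_def hdiff_def phi_def Z1_def z0_def z1_def)
  moreover have "(LBINT \<theta>:{-T..0}. (phi \<theta>)\<^sup>2) \<ge> 0"
    by (simp add: set_lebesgue_integral_def)
  ultimately show ?thesis
    using power_mono[of "sqrt (LBINT \<theta>:{-T..0}. (phi \<theta>)\<^sup>2)" nn 2] by simp
qed

lemma phi_measurable: "(\<lambda>\<theta>. indicator {-T..0} \<theta> * phi \<theta>) \<in> borel_measurable lborel"
proof -
  let ?Z = "\<lambda>\<theta>. integral\<^sup>L lborel (\<lambda>v. indicator {\<theta>..0} v * (indicator {-T..0} v * z1 v))"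
  have m: "?Z \<in> borel_measurable lborel"
    using z1_set_integrable by (intro measurable_tail_integral) (simp add: set_integrable_def)
  have e: "(\<lambda>\<theta>. indicator {-T..0} \<theta> * phi \<theta>) = (\<lambda>\<theta>. indicator {-T..0} \<theta> * (z0 / r - ?Z \<theta>))"
  proof (rule ext)
    fix \<theta>
    show "indicator {-T..0} \<theta> * phi \<theta> = indicator {-T..0} \<theta> * (z0 / r - ?Z \<theta>)"
    proof (cases "\<theta> \<in> {-T..0}")
      case True
      have "(\<lambda>v. indicator {\<theta>..0} v * (indicator {-T..0} v * z1 v)) = (\<lambda>v. indicator {\<theta>..0} v * z1 v)"
        using True by (auto simp: fun_eq_iff split: split_indicator)
      then show ?thesis by (simp add: phi_def Z1_def set_lebesgue_integral_def)
    qed simp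
  qed
  show ?thesis unfolding e using m by measurable
qed

text \<open>\<open>\<phi>\<close> is bounded on \<open>[-T,0]\<close>, hence square integrable there.\<close>
lemma phi_sq_integrable: "integrable lborel (\<lambda>\<theta>. indicator {-T..0} \<theta> * (phi \<theta>)\<^sup>2)"
proof -
  define c where "c = \<bar>z0\<bar> / r + (LBINT s:{-T..0}. \<bar>z1 s\<bar>)"
  have bound: "\<bar>phi \<theta>\<bar> \<le> c" if "\<theta> \<in> {-T..0}" for \<theta>
  proof -
    have "\<bar>Z1 \<theta>\<bar> \<le> (LBINT s:{-T..0}. \<bar>z1 s\<bar>)"
      unfolding Z1_def by (rule tail_integral_abs_le[OF z1_set_integrable that])
    moreover have "\<bar>phi \<theta>\<bar> \<le> \<bar>z0 / r\<bar> + \<bar>Z1 \<theta>\<bar>"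
      unfolding phi_def by (rule abs_triangle_ineq4)
    moreover have "\<bar>z0 / r\<bar> = \<bar>z0\<bar> / r" using r by simp
    ultimately show ?thesis unfolding c_def by linarith
  qed
  show ?thesis
  proof (rule Bochner_Integration.integrable_bound[where f="\<lambda>\<theta>. indicator {-T..0} \<theta> * c\<^sup>2"])
    show "integrable lborel (\<lambda>\<theta>. indicator {-T..0} \<theta> * c\<^sup>2)"
      by (simp add: emeasure_lborel_Icc_eq)
    have "(\<lambda>\<theta>. indicator {-T..0} \<theta> * (phi \<theta>)\<^sup>2) = (\<lambda>\<theta>. (indicator {-T..0} \<theta> * phi \<theta>)\<^sup>2)"
      by (auto simp: fun_eq_iff split: split_indicator)
    then show "(\<lambda>\<theta>. indicator {-T..0} \<theta> * (phi \<theta>)\<^sup>2) \<in> borel_measurable lborel"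
      using phi_measurable by simp
    have "(phi \<theta>)\<^sup>2 \<le> c\<^sup>2" if "\<theta> \<in> {-T..0}" for \<theta>
      using bound[OF that] by (metis abs_ge_zero order_trans power2_abs power_mono)
    then show "AE \<theta> in lborel. norm (indicator {-T..0} \<theta> * (phi \<theta>)\<^sup>2) \<le> norm (indicator {-T..0} \<theta> * c\<^sup>2)"
      by (intro AE_I2) (auto split: split_indicator)
  qed
qed

lemma phi_shift_measurable: "phi_shift t \<in> borel_measurable lborel"
proof -
  have "phi_shift t = (\<lambda>s. (\<lambda>\<theta>. indicator {-T..0} \<theta> * phi \<theta>) (t + s))"
    by (simp add: fun_eq_iff phi_shift_def)
  also have "\<dots> \<in> borel_measurable lborel"
    using phi_measurable by measurable
  finally show ?thesis .
qed

lemma phi_shift_square: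
  shows "integrable lborel (\<lambda>s. (phi_shift t s)\<^sup>2)"
    and "integral\<^sup>L lborel (\<lambda>s. (phi_shift t s)\<^sup>2) \<le> nn\<^sup>2"
proof -
  have sq: "(\<lambda>s. (phi_shift t s)\<^sup>2) = (\<lambda>s. indicator {-T..0} (t + s) * (phi (t + s))\<^sup>2)"
    by (auto simp: fun_eq_iff phi_shift_def power2_eq_square split: split_indicator)
  have "set_integrable lborel {-T..0} (\<lambda>\<theta>. (phi \<theta>)\<^sup>2)"
    using phi_sq_integrable by (simp add: set_integrable_def)
  note shift = set_integral_shift[OF this, of t]
  show "integrable lborel (\<lambda>s. (phi_shift t s)\<^sup>2)"
    unfolding sq by (rule shift(1))
  show "integral\<^sup>L lborel (\<lambda>s. (phi_shift t s)\<^sup>2) \<le> nn\<^sup>2"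
    unfolding sq shift(2) by (rule phi_sq_integral_le)
qed

lemma D1_tail_integral:
  assumes t: "t \<ge> 0" and s: "s \<in> {-T..0}"
  shows "(LBINT u:{s..0}. D1 t u) = (if t + s < 0 then Z1 (t+s) else 0) + (LBINT \<theta>:{max (t+s) 0..t}. D0 \<theta>)"
proof -
  define P where "P = (\<lambda>u. if t + s < 0 then indicator {t+s..0} (t+u) * z1 (t+u) else 0)"
  define Q where "Q = (\<lambda>u. indicator {max (t+s) 0..t} (t+u) * D0 (t+u))"
  have z: "set_integrable lborel {t+s..0} z1"
    by (rule set_integrable_subset[OF z1_set_integrable]) (use t s in auto)
  have d: "set_integrable lborel {max (t+s) 0..t} D0"
    by (rule borel_integrable_atLeastAtMost', rule continuous_on_subset[OF D0_continuous]) auto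
  have iP: "integrable lborel P" and intP: "integral\<^sup>L lborel P = (if t + s < 0 then Z1 (t+s) else 0)"
    using set_integral_shift[OF z, of t] by (cases "t + s < 0"; simp add: P_def Z1_def)+
  have iQ: "integrable lborel Q" and intQ: "integral\<^sup>L lborel Q = (LBINT \<theta>:{max (t+s) 0..t}. D0 \<theta>)"
    unfolding Q_def by (rule set_integral_shift[OF d])+
  have ae: "AE u in lborel. indicator {s..0} u * D1 t u = P u + Q u"
    using D1_formula[OF t] AE_lborel_singleton[of "-t"]
  proof eventually_elim
    case (elim u)
    show ?case
    proof (cases "u \<in> {s..0}")
      case True
      then have "D1 t u = (if t + u < 0 then z1 (t+u) else D0 (t+u))" using elim s by auto
      moreover have "t + u \<noteq> 0" using elim by auto
      ultimately show ?thesis using True t by (auto simp: P_def Q_def split: split_indicator)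
    qed (use t s in \<open>auto simp: P_def Q_def split: split_indicator\<close>)
  qed
  have "(LBINT u:{s..0}. D1 t u) = integral\<^sup>L lborel (\<lambda>u. P u + Q u)"
    unfolding set_lebesgue_integral_def real_scaleR_def
  proof (rule integral_cong_AE)
    have "set_integrable lborel {s..0} (D1 t)"
      by (rule set_integrable_subset[OF D1_set_integrable[OF t]]) (use s in auto)
    then show "(\<lambda>u. indicator {s..0} u * D1 t u) \<in> borel_measurable lborel"
      by (simp add: set_integrable_def)
  qed (use iP iQ ae in auto)
  also have "\<dots> = integral\<^sup>L lborel P + integral\<^sup>L lborel Q"
    by (rule Bochner_Integration.integral_add[OF iP iQ])
  finally show ?thesis unfolding intP intQ .
qed

lemma D0_tail_integral_abs_le:
  assumes "\<tau> \<in> {0..t}"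
  shows "\<bar>LBINT \<theta>:{max c 0..\<tau>}. D0 \<theta>\<bar> \<le> (LBINT \<theta>:{0..t}. \<bar>D0 \<theta>\<bar>)"
  unfolding set_lebesgue_integral_def real_scaleR_def
proof (rule integral_abs_le_majorant)
  show "integrable lborel (\<lambda>x. indicator {0..t} x * \<bar>D0 x\<bar>)"
    using D0_abs_set_integrable by (simp add: set_integrable_def)
  show "\<bar>indicator {max c 0..\<tau>} x * D0 x\<bar> \<le> indicator {0..t} x * \<bar>D0 x\<bar>" for x
    using assms by (auto split: split_indicator)
qed

lemma Z1_part_abs_le:
  assumes t: "t \<ge> 0" and s: "s \<in> {-T..0}"
  shows "\<bar>if t + s < 0 then Z1 (t+s) else 0\<bar> \<le> nn + \<bar>phi_shift t s\<bar>"
proof (cases "t + s < 0")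
  case True
  then have "phi_shift t s = phi (t+s)" using s t by (simp add: phi_shift_def)
  moreover have "\<bar>Z1 (t+s)\<bar> \<le> \<bar>z0 / r\<bar> + \<bar>phi (t+s)\<bar>"
    using abs_triangle_ineq4[of "z0 / r" "phi (t+s)"] by (simp add: phi_def)
  moreover have "\<bar>z0 / r\<bar> \<le> nn" using z0_le r by (simp add: divide_le_eq mult.commute)
  ultimately show ?thesis using True by simp
qed (use nn_nonneg in simp)

lemma D1_tail_bound:
  assumes \<tau>: "\<tau> \<in> {0..t}" and s: "s \<in> {-T..0}"
  shows "\<bar>LBINT u:{s..0}. D1 \<tau> u\<bar> \<le> nn + (LBINT \<theta>:{0..t}. \<bar>D0 \<theta>\<bar>) + \<bar>phi_shift \<tau> s\<bar>"
proof -
  let ?P = "if \<tau> + s < 0 then Z1 (\<tau>+s) else 0" and ?Q = "LBINT \<theta>:{max (\<tau>+s) 0..\<tau>}. D0 \<theta>"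
  have "(LBINT u:{s..0}. D1 \<tau> u) = ?P + ?Q"
    using D1_tail_integral[of \<tau> s] \<tau> s by simp
  moreover have "\<bar>?P\<bar> \<le> nn + \<bar>phi_shift \<tau> s\<bar>"
    using Z1_part_abs_le[of \<tau> s] \<tau> s by simp
  moreover have "\<bar>?Q\<bar> \<le> (LBINT \<theta>:{0..t}. \<bar>D0 \<theta>\<bar>)"
    by (rule D0_tail_integral_abs_le[OF \<tau>])
  ultimately show ?thesis using abs_triangle_ineq[of ?P ?Q] by linarith
qed

lemma a'_phi_shift_integral:
  shows "integrable lborel (\<lambda>u. \<bar>indicator {-T..0} u * a' u * phi_shift \<tau> u\<bar>)"
    and "integral\<^sup>L lborel (\<lambda>u. \<bar>indicator {-T..0} u * a' u * phi_shift \<tau> u\<bar>) \<le> sqrt A2 * nn"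
proof -
  define f where "f = (\<lambda>u. indicator {-T..0} u * a' u)"
  have f_sq: "(\<lambda>u. (f u)\<^sup>2) = (\<lambda>u. indicator {-T..0} u * (a' u)\<^sup>2)"
    by (auto simp: fun_eq_iff f_def power2_eq_square split: split_indicator)
  have f_int: "integrable lborel (\<lambda>u. (f u)\<^sup>2)" "integral\<^sup>L lborel (\<lambda>u. (f u)\<^sup>2) = A2"
    using a'_L2 unfolding f_sq by (simp_all add: L2_def set_integrable_def A2_def set_lebesgue_integral_def)
  have f_meas: "f \<in> borel_measurable lborel"
    using a'_L2 by (simp add: f_def L2_def set_borel_measurable_def)
  note assms = f_meas phi_shift_measurable f_int(1) phi_shift_square(1)
  show "integrable lborel (\<lambda>u. \<bar>indicator {-T..0} u * a' u * phi_shift \<tau> u\<bar>)"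
    using integrable_mult_of_squares[OF assms] by (simp add: f_def)
  have "integral\<^sup>L lborel (\<lambda>u. \<bar>f u * phi_shift \<tau> u\<bar>)
      \<le> sqrt A2 * sqrt (integral\<^sup>L lborel (\<lambda>u. (phi_shift \<tau> u)\<^sup>2))"
    using Cauchy_Schwarz_integral[OF assms] unfolding f_int(2) .
  also have "\<dots> \<le> sqrt A2 * nn"
    using nn_nonneg A2_nonneg real_sqrt_le_mono[OF phi_shift_square(2)[of \<tau>]]
    by (intro mult_left_mono) auto
  finally show "integral\<^sup>L lborel (\<lambda>u. \<bar>indicator {-T..0} u * a' u * phi_shift \<tau> u\<bar>) \<le> sqrt A2 * nn"
    by (simp add: f_def)
qed

lemma integral_a_D1_bound:
  assumes \<tau>: "\<tau> \<in> {0..t}"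
  shows "\<bar>LBINT s:{-T..0}. a s * D1 \<tau> s\<bar> \<le> A1 * ((LBINT \<theta>:{0..t}. \<bar>D0 \<theta>\<bar>) + nn) + sqrt A2 * nn"
proof -
  define B where "B = (LBINT \<theta>:{0..t}. \<bar>D0 \<theta>\<bar>)"
  define V where "V = (\<lambda>u. LBINT s:{u..0}. D1 \<tau> s)"
  let ?aG = "\<lambda>u. \<bar>indicator {-T..0} u * a' u * phi_shift \<tau> u\<bar>"
  have parts: "(LBINT s:{-T..0}. a s * D1 \<tau> s) = integral\<^sup>L lborel (\<lambda>u. indicator {-T..0} u * (a' u * V u))"
    using integral_a_by_parts(2)[OF D1_set_integrable] \<tau> by (simp add: V_def set_lebesgue_integral_def)
  have i_abs: "integrable lborel (\<lambda>u. indicator {-T..0} u * \<bar>a' u\<bar>)"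
    using integrable_abs[OF a'_set_integrable[unfolded set_integrable_def]] by (simp add: abs_mult)
  note i_aG = a'_phi_shift_integral(1)[of \<tau>]
  have "\<bar>integral\<^sup>L lborel (\<lambda>u. indicator {-T..0} u * (a' u * V u))\<bar>
      \<le> integral\<^sup>L lborel (\<lambda>u. indicator {-T..0} u * \<bar>a' u\<bar> * (B + nn) + ?aG u)"
  proof (rule integral_abs_le_majorant)
    show "integrable lborel (\<lambda>u. indicator {-T..0} u * \<bar>a' u\<bar> * (B + nn) + ?aG u)"
      using i_abs i_aG by auto
    show "\<bar>indicator {-T..0} u * (a' u * V u)\<bar> \<le> indicator {-T..0} u * \<bar>a' u\<bar> * (B + nn) + ?aG u" for u
    proof (cases "u \<in> {-T..0}")
      case True
      have "\<bar>a' u * V u\<bar> \<le> \<bar>a' u\<bar> * (B + nn + \<bar>phi_shift \<tau> u\<bar>)"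
        using D1_tail_bound[OF \<tau> True] unfolding abs_mult V_def B_def
        by (intro mult_left_mono) auto
      then show ?thesis using True by (simp add: abs_mult algebra_simps)
    qed simp
  qed
  also have "\<dots> = A1 * (B + nn) + integral\<^sup>L lborel ?aG"
    using i_abs i_aG by (simp add: A1_def set_lebesgue_integral_def)
  finally show ?thesis
    unfolding parts B_def using a'_phi_shift_integral(2)[of \<tau>] by linarith
qed

lemma g_bound:
  assumes \<tau>: "\<tau> \<in> {0..t}"
  shows "\<bar>g \<tau>\<bar> \<le> L * \<bar>D0 \<tau>\<bar> + L * A1 * (LBINT \<theta>:{0..t}. \<bar>D0 \<theta>\<bar>) + L * (A1 + sqrt A2) * nn"
proof -
  have \<tau>0: "\<tau> \<ge> 0" using \<tau> by simp
  have "\<bar>g \<tau>\<bar> \<le> L * (\<bar>D0 \<tau>\<bar> + \<bar>LBINT s:{-T..0}. a s * D1 \<tau> s\<bar>)"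
    using fF_lipschitz_components[OF mild_sol_in_H[OF X_mild \<tau>0] mild_sol_in_H[OF Xb_mild \<tau>0]]
    by (simp add: g_def D0_def D1_def)
  also have "\<dots> \<le> L * (\<bar>D0 \<tau>\<bar> + (A1 * ((LBINT \<theta>:{0..t}. \<bar>D0 \<theta>\<bar>) + nn) + sqrt A2 * nn))"
    using integral_a_D1_bound[OF \<tau>] L_nonneg by (intro mult_left_mono add_left_mono)
  finally show ?thesis by (simp add: algebra_simps)
qed

lemma D0_integral_inequality:
  assumes t: "t \<in> {0..T}"
  shows "\<bar>D0 t\<bar> \<le> alpha_D * nn + beta_D * (LBINT \<theta>:{0..t}. \<bar>D0 \<theta>\<bar>)"
proof -
  define E where "E = exp (r*T)"
  define B where "B = (LBINT \<theta>:{0..t}. \<bar>D0 \<theta>\<bar>)"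
  define k where "k = L * A1 * B + L * (A1 + sqrt A2) * nn"
  have t0: "t \<ge> 0" using t by simp
  have E_ge: "exp (r * \<theta>) \<le> E" if "\<theta> \<le> t" for \<theta>
    using t that r by (auto simp: E_def)
  have B0: "B \<ge> 0" unfolding B_def by (simp add: set_lebesgue_integral_def)
  have k0: "k \<ge> 0" unfolding k_def using L_nonneg A1_nonneg A2_nonneg B0 nn_nonneg by simp
  have int_g: "\<bar>LBINT \<tau>:{0..t}. g \<tau> * exp (r*(t-\<tau>))\<bar> \<le> (LBINT \<tau>:{0..t}. E * (L * \<bar>D0 \<tau>\<bar>) + E * k)"
    unfolding set_lebesgue_integral_def real_scaleR_def
  proof (rule integral_abs_le_majorant)
    have "set_integrable lborel {0..t} (\<lambda>\<tau>. E * (L * \<bar>D0 \<tau>\<bar>) + E * k)"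
      by (rule borel_integrable_atLeastAtMost')
         (auto intro!: continuous_intros continuous_on_subset[OF D0_continuous])
    then show "integrable lborel (\<lambda>\<tau>. indicator {0..t} \<tau> * (E * (L * \<bar>D0 \<tau>\<bar>) + E * k))"
      by (simp add: set_integrable_def)
    show "\<bar>indicator {0..t} \<tau> * (g \<tau> * exp (r * (t - \<tau>)))\<bar> \<le> indicator {0..t} \<tau> * (E * (L * \<bar>D0 \<tau>\<bar>) + E * k)" for \<tau>
    proof (cases "\<tau> \<in> {0..t}")
      case True
      have "\<bar>g \<tau>\<bar> * exp (r * (t - \<tau>)) \<le> (L * \<bar>D0 \<tau>\<bar> + k) * E"
        using g_bound[OF True] E_ge[of "t - \<tau>"] True by (intro mult_mono) (auto simp: k_def B_def)
      then show ?thesis using True by (simp add: abs_mult algebra_simps)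
    qed simp
  qed
  also have "\<dots> = (LBINT \<tau>:{0..t}. E * (L * \<bar>D0 \<tau>\<bar>)) + (LBINT \<tau>:{0..t}. E * k)"
    by (rule set_integral_add(2))
       (auto intro!: borel_integrable_atLeastAtMost' continuous_intros continuous_on_subset[OF D0_continuous])
  also have "\<dots> = E * L * B + E * k * t"
    using t0 by (simp add: B_def set_integral_const)
  also have "\<dots> \<le> E * L * B + E * k * T"
    using t k0 by (intro add_left_mono mult_left_mono) (auto simp: E_def)
  finally have int_g': "\<bar>LBINT \<tau>:{0..t}. g \<tau> * exp (r*(t-\<tau>))\<bar> \<le> E * L * B + E * k * T" .
  have z0_term: "\<bar>z0 * exp (r*t)\<bar> \<le> r * nn * E"
    using z0_le E_ge[of t] by (simp add: abs_mult mult_mono)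
  have "\<bar>D0 t\<bar> \<le> \<bar>z0 * exp (r*t)\<bar> + \<bar>LBINT \<tau>:{0..t}. g \<tau> * exp (r*(t-\<tau>))\<bar>"
    unfolding D0_formula[OF t0] by (rule abs_triangle_ineq)
  also have "\<dots> \<le> r * nn * E + (E * L * B + E * k * T)"
    using z0_term int_g' by (rule add_mono)
  also have "\<dots> = alpha_D * nn + beta_D * B"
    by (simp add: alpha_D_def beta_D_def k_def E_def algebra_simps)
  finally show ?thesis unfolding B_def .
qed

lemma D0_bound:
  assumes "t \<in> {0..T}"
  shows "\<bar>D0 t\<bar> \<le> K_D * nn"
proof -
  have "\<bar>D0 t\<bar> \<le> 2 * (alpha_D * nn) * exp ((2 * beta_D + 1) * T)"
    using T alpha_D_nonneg nn_nonneg beta_D_nonneg D0_integral_inequality assms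
    by (intro Gronwall_weighted_sup[where u="\<lambda>\<theta>. \<bar>D0 \<theta>\<bar>"])
       (auto intro!: continuous_intros continuous_on_subset[OF D0_continuous])
  then show ?thesis by (simp add: K_D_def algebra_simps)
qed

lemma D0_abs_integral_le:
  assumes "t \<in> {0..T}"
  shows "(LBINT \<theta>:{0..t}. \<bar>D0 \<theta>\<bar>) \<le> T * (K_D * nn)"
proof -
  have "(LBINT \<theta>:{0..t}. \<bar>D0 \<theta>\<bar>) \<le> (LBINT \<theta>:{0..t}. K_D * nn)"
    using assms D0_bound
    by (intro set_integral_mono D0_abs_set_integrable borel_integrable_atLeastAtMost' continuous_on_const) auto
  also have "\<dots> = t * (K_D * nn)" using assms by (simp add: set_integral_const)
  also have "\<dots> \<le> T * (K_D * nn)"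
    using assms K_D_nonneg nn_nonneg by (intro mult_right_mono) auto
  finally show ?thesis .
qed

text \<open>The second component of \<open>A\<^sup>-\<^sup>1(X(t) - Xb(t))\<close>, so that
  \<open>\<parallel>X(t) - Xb(t)\<parallel>\<^sub>-\<^sub>1 = \<surd>((D0 t/r)\<^sup>2 + \<integral> \<psi>\<^sub>t\<^sup>2)\<close>.\<close>
definition psi :: "real \<Rightarrow> real \<Rightarrow> real" where
  "psi t s = D0 t / r - (LBINT u:{s..0}. D1 t u)"

lemma weak_norm_eq:
  "norm_m1 T r (hdiff (X t) (Xb t)) = sqrt ((D0 t / r)\<^sup>2 + (LBINT s:{-T..0}. (psi t s)\<^sup>2))"
  by (simp add: norm_m1_def hnorm_def Ainv_def hdiff_def D0_def D1_def psi_def)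

lemma D0_div_r_le:
  assumes "t \<in> {0..T}"
  shows "\<bar>D0 t / r\<bar> \<le> K_D * nn / r"
  using D0_bound[OF assms] r by (simp add: divide_right_mono)

lemma psi_abs_le:
  assumes t: "t \<in> {0..T}" and s: "s \<in> {-T..0}"
  shows "\<bar>psi t s\<bar> \<le> (K_D/r + T * K_D + 1) * nn + \<bar>phi_shift t s\<bar>"
proof -
  have "\<bar>LBINT u:{s..0}. D1 t u\<bar> \<le> nn + T * (K_D * nn) + \<bar>phi_shift t s\<bar>"
    using D1_tail_bound[of t t s] D0_abs_integral_le[OF t] t s by simp
  then show ?thesis
    using D0_div_r_le[OF t] abs_triangle_ineq4[of "D0 t / r" "LBINT u:{s..0}. D1 t u"]
    by (simp add: psi_def algebra_simps)
qed

lemma psi_sq_integral_le: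
  assumes t: "t \<in> {0..T}"
  defines "B \<equiv> (K_D/r + T * K_D + 1) * nn"
  shows "(LBINT s:{-T..0}. (psi t s)\<^sup>2) \<le> 2 * B\<^sup>2 * T + 2 * nn\<^sup>2"
proof -
  let ?G = "phi_shift t"
  have i_c: "integrable lborel (\<lambda>s. indicator {-T..0} s * (2 * B\<^sup>2))"
    by (simp add: emeasure_lborel_Icc_eq)
  note G_sq = phi_shift_square[of t]
  have "(LBINT s:{-T..0}. (psi t s)\<^sup>2) \<le> integral\<^sup>L lborel (\<lambda>s. indicator {-T..0} s * (2 * B\<^sup>2) + 2 * (?G s)\<^sup>2)"
    using abs_ge_self unfolding set_lebesgue_integral_def real_scaleR_def
  proof (rule order_trans[OF _ integral_abs_le_majorant])
    show "integrable lborel (\<lambda>s. indicator {-T..0} s * (2 * B\<^sup>2) + 2 * (?G s)\<^sup>2)"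
      using i_c G_sq by auto
    show "\<bar>indicator {-T..0} s * (psi t s)\<^sup>2\<bar> \<le> indicator {-T..0} s * (2 * B\<^sup>2) + 2 * (?G s)\<^sup>2" for s
    proof (cases "s \<in> {-T..0}")
      case True
      have "\<bar>psi t s\<bar>\<^sup>2 \<le> (B + \<bar>?G s\<bar>)\<^sup>2"
        using psi_abs_le[OF t True] by (intro power_mono) (auto simp: B_def)
      also have "\<dots> \<le> 2 * B\<^sup>2 + 2 * (?G s)\<^sup>2"
        using zero_le_square[of "B - \<bar>?G s\<bar>"] by (simp add: power2_eq_square algebra_simps)
      finally show ?thesis using True by simp
    qed simp
  qed
  also have "\<dots> = 2 * B\<^sup>2 * T + 2 * integral\<^sup>L lborel (\<lambda>s. (?G s)\<^sup>2)"
    using i_c G_sq T by simp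
  also have "\<dots> \<le> 2 * B\<^sup>2 * T + 2 * nn\<^sup>2"
    using G_sq by simp
  finally show ?thesis .
qed

lemma weak_norm_bound:
  assumes t: "t \<in> {0..T}"
  shows "norm_m1 T r (hdiff (X t) (Xb t)) \<le> C_stab * nn"
proof -
  define B where "B = (K_D/r + T * K_D + 1) * nn"
  have D0_sq: "(D0 t / r)\<^sup>2 \<le> (K_D * nn / r)\<^sup>2"
    using power_mono[OF D0_div_r_le[OF t] abs_ge_zero, of 2] unfolding power2_abs .
  have "norm_m1 T r (hdiff (X t) (Xb t)) \<le> sqrt ((K_D * nn / r)\<^sup>2 + (2 * B\<^sup>2 * T + 2 * nn\<^sup>2))"
    unfolding weak_norm_eq B_def using D0_sq psi_sq_integral_le[OF t]
    by (intro real_sqrt_le_mono add_mono)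
  also have "(K_D * nn / r)\<^sup>2 + (2 * B\<^sup>2 * T + 2 * nn\<^sup>2)
      = nn\<^sup>2 * ((K_D/r)\<^sup>2 + 2 * T * (K_D/r + T * K_D + 1)\<^sup>2 + 2)"
  proof -
    have "B\<^sup>2 = nn\<^sup>2 * (K_D/r + T * K_D + 1)\<^sup>2" by (simp add: B_def power_mult_distrib)
    then show ?thesis by (simp add: power_mult_distrib power_divide algebra_simps)
  qed
  also have "sqrt \<dots> = C_stab * nn"
    using nn_nonneg by (simp add: real_sqrt_mult C_stab_def)
  finally show ?thesis .
qed

lemma fst_bound:
  assumes "t \<in> {0..T}"
  shows "\<bar>fst (X t) - fst (Xb t)\<bar> \<le> r * C_stab * nn"
proof -
  have "\<bar>D0 t\<bar> \<le> K_D * nn" by (rule D0_bound[OF assms])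
  also have "K_D * nn = r * (K_D / r) * nn" using r by simp
  also have "\<dots> \<le> r * C_stab * nn"
    using K_D_le_C_stab r nn_nonneg by (intro mult_right_mono mult_left_mono) auto
  finally show ?thesis by (simp add: D0_def)
qed

end

theorem lemma3p5:
  fixes T r :: real and a :: "real \<Rightarrow> real" and f0 :: "real \<times> real \<Rightarrow> real"
  assumes "T > 0" and "r > 0"
    and "W12 T a" and "\<forall>s\<in>{-T..0}. a s \<ge> 0" and "a (-T) = 0"
    and "\<exists>L. L-lipschitz_on UNIV f0"
  shows "\<exists>C>0. \<forall>\<eta> \<eta>b X Xb.
           in_H T \<eta> \<longrightarrow> in_H T \<eta>b \<longrightarrow>
           mild_sol T r a f0 (\<lambda>_. 0) \<eta> X \<longrightarrow> mild_sol T r a f0 (\<lambda>_. 0) \<eta>b Xb \<longrightarrow>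
           (\<forall>t\<in>{0..T}.
              norm_m1 T r (hdiff (X t) (Xb t)) \<le> C * norm_m1 T r (hdiff \<eta> \<eta>b) \<and>
              \<bar>fst (X t) - fst (Xb t)\<bar> \<le> r * C * norm_m1 T r (hdiff \<eta> \<eta>b))"
proof -
  obtain a' where a': "L2 T a'" "\<forall>s\<in>{-T..0}. a s = a (-T) + (LBINT u:{-T..s}. a' u)"
    using assms(3) unfolding W12_def by blast
  obtain L where lip: "L-lipschitz_on UNIV f0" using assms(6) by blast
  have aeq: "a s = (LBINT u:{-T..s}. a' u)" if "s \<in> {-T..0}" for s
    using a'(2) that assms(5) by simp
  have data: "delay_data T r a a' f0 L"
    using assms(1,2) a'(1) aeq lip by (simp add: delay_data_def)
  interpret delay_data T r a a' f0 L by (rule data)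
  show ?thesis
  proof (intro exI[of _ C_stab] conjI allI impI ballI C_stab_pos)
    fix \<eta> \<eta>b X Xb t
    assume "in_H T \<eta>" "in_H T \<eta>b" "mild_sol T r a f0 (\<lambda>_. 0) \<eta> X" "mild_sol T r a f0 (\<lambda>_. 0) \<eta>b Xb"
      and t: "t \<in> {0..T}"
    then interpret solution_pair T r a a' f0 L \<eta> \<eta>b X Xb
      by (intro solution_pair.intro data solution_pair_axioms.intro)
    show "norm_m1 T r (hdiff (X t) (Xb t)) \<le> C_stab * norm_m1 T r (hdiff \<eta> \<eta>b)"
      using weak_norm_bound[OF t] by (simp add: nn_def)
    show "\<bar>fst (X t) - fst (Xb t)\<bar> \<le> r * C_stab * norm_m1 T r (hdiff \<eta> \<eta>b)"
      using fst_bound[OF t] by (simp add: nn_def)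
  qed
qed

end
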